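(* Let $n\le d$, let $\{u_i\}_{i=1}^n$ be an orthonormal family in $\mathbb{C}^d$, let $\{e_i\}$ be the standard basis of $\mathbb{C}^n$, and let $K=\sum_{i=1}^n|e_i\rangle\langle u_i\otimes\overline{u_i}|$. If $\rho$ is a PPT bipartite PSD matrix on $\mathbb{C}^d\otimes\mathbb{C}^d$ whose range is contained in the symmetric subspace $\mathbb{C}^d\vee\mathbb{C}^d$, then $Z^\Gamma_K(\rho)=K\rho^\Gamma K^*\in\mathsf{DNN}_n$.
   Context: $\rho^\Gamma$ is the partial transpose on the second factor (standard basis), $\overline{u}$ is entrywise complex conjugation, and $\rho$ is PPT if $\rho\ge0$ and $\rho^\Gamma\ge0$. The symmetric subspace $\mathbb{C}^d\vee\mathbb{C}^d$ is the $+1$ eigenspace of the flip operator $F=\sum_{i,j}|ij\rangle\langle ji|$; range in it is equivalent to $\rho F=F\rho=\rho$. $\mathsf{DNN}_n=\mathcal{M}_n^+\cap\mathcal{M}_n(\mathbb{R}_+)$ is the cone of doubly nonnegative matrices (PSD with entrywise nonnegative entries). *)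

theory Defs
  imports "HOL-Analysis.Analysis"
begin

text \<open>Matrices are type-indexed: a square matrix on C^m is complex^'m^'m.
  The bipartite space C^d (x) C^d is indexed by 'd \<times> 'd, with |ij> the basis vector at (i,j).\<close>

definition cmat_adj :: "complex^'m::finite^'n::finite \<Rightarrow> complex^'n^'m" where
  "cmat_adj A = (\<chi> i j. cnj (A $ j $ i))"

definition cmat_psd :: "complex^'m::finite^'m \<Rightarrow> bool" where
  "cmat_psd A \<longleftrightarrow> (\<forall>i j. A $ i $ j = cnj (A $ j $ i)) \<and>
     (\<forall>x::complex^'m. 0 \<le> Re (\<Sum>i\<in>UNIV. cnj (x $ i) * (\<Sum>j\<in>UNIV. A $ i $ j * x $ j)))"

definition partial_transpose :: "complex^('d::finite\<times>'d)^('d::finite\<times>'d) \<Rightarrow> complex^('d::finite\<times>'d)^('d::finite\<times>'d)" where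
  "partial_transpose \<rho> = (\<chi> p q. \<rho> $ (fst p, snd q) $ (fst q, snd p))"

definition is_PPT :: "complex^('d::finite\<times>'d)^('d::finite\<times>'d) \<Rightarrow> bool" where
  "is_PPT \<rho> \<longleftrightarrow> cmat_psd \<rho> \<and> cmat_psd (partial_transpose \<rho>)"

definition flip_op :: "complex^('d::finite\<times>'d)^('d::finite\<times>'d)" where
  "flip_op = (\<chi> p q. if fst p = snd q \<and> snd p = fst q then 1 else 0)"

definition sym_subspace :: "(complex^('d::finite\<times>'d)) set" where
  "sym_subspace = {v. flip_op *v v = v}"

definition DNN :: "complex^'n::finite^'n \<Rightarrow> bool" where
  "DNN A \<longleftrightarrow> cmat_psd A \<and> (\<forall>i j. Im (A $ i $ j) = 0 \<and> 0 \<le> Re (A $ i $ j))"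

definition cinner :: "complex^'d::finite \<Rightarrow> complex^'d \<Rightarrow> complex" where
  "cinner x y = (\<Sum>a\<in>UNIV. cnj (x $ a) * y $ a)"

text \<open>K = sum_i |e_i><u_i (x) conj u_i|, so K_{i,(a,b)} = conj(u_i(a) * conj(u_i(b))).\<close>
definition K_op :: "('n::finite \<Rightarrow> complex^'d) \<Rightarrow> complex^('d::finite\<times>'d)^'n" where
  "K_op u = (\<chi> i p. cnj ((u i) $ fst p * cnj ((u i) $ snd p)))"

end

theory Submission
  imports Defs
begin

(* The (i,j) entry of K rho^Gamma K^* is <u_i (x) conj u_i| rho^Gamma |u_j (x) conj u_j>; moving
   the partial transpose onto the product vectors turns it into <u_i (x) u_j| rho |u_j (x) u_i>.
   Because rho maps into the symmetric subspace, the factors of the bra may be exchanged, so the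
   entry is <v| rho |v> for v = u_j (x) u_i, which is real and nonnegative as rho >= 0.
   Positive semidefiniteness of the whole matrix is inherited from rho^Gamma >= 0 by congruence. *)

definition vec_cnj :: "complex^'a::finite \<Rightarrow> complex^'a" where
  "vec_cnj x = (\<chi> a. cnj (x $ a))"

definition vec_tensor :: "complex^'a::finite \<Rightarrow> complex^'b::finite \<Rightarrow> complex^('a \<times> 'b)" where
  "vec_tensor x y = (\<chi> p. x $ fst p * y $ snd p)"

lemma vec_cnj_cnj [simp]: "vec_cnj (vec_cnj x) = x"
  by (simp add: vec_cnj_def vec_eq_iff)

lemma cnj_cinner: "cnj (cinner x y) = cinner y x"
  by (simp add: cinner_def mult.commute)

lemma cmat_adj_adj [simp]: "cmat_adj (cmat_adj A) = A"
  by (simp add: cmat_adj_def vec_eq_iff)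

lemma cmat_adj_mult: "cmat_adj (A ** B) = cmat_adj B ** cmat_adj A"
  by (simp add: cmat_adj_def matrix_matrix_mult_def vec_eq_iff mult.commute)

lemma cinner_mult_vec_adj: "cinner x (A *v y) = cinner (cmat_adj A *v x) y"
proof -
  have "cinner x (A *v y) = (\<Sum>i\<in>UNIV. \<Sum>j\<in>UNIV. cnj (x $ i) * A $ i $ j * y $ j)"
    by (simp add: cinner_def matrix_vector_mult_def sum_distrib_left mult.assoc)
  also have "\<dots> = (\<Sum>j\<in>UNIV. \<Sum>i\<in>UNIV. cnj (x $ i) * A $ i $ j * y $ j)"
    by (rule sum.swap)
  also have "\<dots> = cinner (cmat_adj A *v x) y"
    by (simp add: cinner_def matrix_vector_mult_def cmat_adj_def sum_distrib_left ac_simps)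
  finally show ?thesis .
qed

lemma cmat_adj_eq_iff: "cmat_adj A = A \<longleftrightarrow> (\<forall>i j. A $ i $ j = cnj (A $ j $ i))"
  by (simp add: cmat_adj_def vec_eq_iff) (metis complex_cnj_cnj)

lemma cmat_psd_iff:
  "cmat_psd A \<longleftrightarrow> cmat_adj A = A \<and> (\<forall>x. 0 \<le> Re (cinner x (A *v x)))"
  by (simp only: cmat_psd_def cmat_adj_eq_iff cinner_def matrix_vector_mult_def vec_lambda_beta)

lemma Im_cinner_hermitian:
  assumes "cmat_adj A = A"
  shows "Im (cinner x (A *v x)) = 0"
proof -
  have "cnj (cinner x (A *v x)) = cinner x (A *v x)"
    by (metis assms cinner_mult_vec_adj cnj_cinner)
  then show ?thesis
    using Reals_cnj_iff complex_is_Real_iff by blast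
qed

lemma cmat_psd_congruence:
  assumes "cmat_psd B"
  shows "cmat_psd (A ** B ** cmat_adj A)"
  unfolding cmat_psd_iff
proof
  show "cmat_adj (A ** B ** cmat_adj A) = A ** B ** cmat_adj A"
    using assms by (simp add: cmat_psd_iff cmat_adj_mult matrix_mul_assoc)
  have "cinner x ((A ** B ** cmat_adj A) *v x) = cinner (cmat_adj A *v x) (B *v (cmat_adj A *v x))" for x
    unfolding matrix_vector_mul_assoc[symmetric] by (rule cinner_mult_vec_adj)
  then show "\<forall>x. 0 \<le> Re (cinner x ((A ** B ** cmat_adj A) *v x))"
    using assms by (simp add: cmat_psd_iff)
qed

lemma cmat_congruence_entry:
  "(A ** B ** cmat_adj A) $ i $ j = cinner (vec_cnj (A $ i)) (B *v vec_cnj (A $ j))"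
proof -
  have "(A ** B ** cmat_adj A) $ i $ j = (\<Sum>q\<in>UNIV. \<Sum>p\<in>UNIV. A $ i $ p * B $ p $ q * cnj (A $ j $ q))"
    by (simp add: matrix_matrix_mult_def cmat_adj_def sum_distrib_right)
  also have "\<dots> = (\<Sum>p\<in>UNIV. \<Sum>q\<in>UNIV. A $ i $ p * B $ p $ q * cnj (A $ j $ q))"
    by (rule sum.swap)
  also have "\<dots> = cinner (vec_cnj (A $ i)) (B *v vec_cnj (A $ j))"
    by (simp add: cinner_def vec_cnj_def matrix_vector_mult_def sum_distrib_left mult.assoc)
  finally show ?thesis .
qed

lemma K_op_row: "K_op u $ i = vec_cnj (vec_tensor (u i) (vec_cnj (u i)))"
  by (simp add: K_op_def vec_cnj_def vec_tensor_def vec_eq_iff)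

lemma sum_UNIV_pair: "(\<Sum>p\<in>UNIV. f p) = (\<Sum>a\<in>UNIV. \<Sum>b\<in>UNIV. f (a, b))"
  by (metis UNIV_Times_UNIV sum.cartesian_product')

lemma sum_swap_snd:
  "(\<Sum>p\<in>UNIV. \<Sum>q\<in>UNIV. f p q) = (\<Sum>p\<in>UNIV. \<Sum>q\<in>UNIV. f (fst p, snd q) (fst q, snd p))"
  for f :: "'a::finite \<times> 'b::finite \<Rightarrow> 'a \<times> 'b \<Rightarrow> 'c::comm_monoid_add"
proof -
  define swap_snd :: "('a \<times> 'b) \<times> ('a \<times> 'b) \<Rightarrow> ('a \<times> 'b) \<times> ('a \<times> 'b)"
    where "swap_snd = (\<lambda>(p, q). ((fst p, snd q), (fst q, snd p)))"
  have "sum (case_prod f) UNIV = sum (case_prod f \<circ> swap_snd) UNIV"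
    by (rule sum.reindex_bij_witness[where i = swap_snd and j = swap_snd]) (auto simp: swap_snd_def)
  then show ?thesis
    by (simp add: sum.cartesian_product swap_snd_def comp_def case_prod_beta')
qed

lemma partial_transpose_cinner_tensor:
  "cinner (vec_tensor x y) (partial_transpose \<rho> *v vec_tensor z w)
     = cinner (vec_tensor x (vec_cnj w)) (\<rho> *v vec_tensor z (vec_cnj y))"
proof -
  have "cinner (vec_tensor x y) (partial_transpose \<rho> *v vec_tensor z w)
      = (\<Sum>p\<in>UNIV. \<Sum>q\<in>UNIV. cnj (x $ fst p * y $ snd p) *
           (\<rho> $ (fst p, snd q) $ (fst q, snd p) * (z $ fst q * w $ snd q)))"
    by (simp add: cinner_def vec_tensor_def partial_transpose_def matrix_vector_mult_def
        sum_distrib_left)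
  also have "\<dots> = (\<Sum>p\<in>UNIV. \<Sum>q\<in>UNIV. cnj (x $ fst p * y $ snd q) *
           (\<rho> $ p $ q * (z $ fst q * w $ snd p)))"
    by (subst sum_swap_snd) simp
  also have "\<dots> = cinner (vec_tensor x (vec_cnj w)) (\<rho> *v vec_tensor z (vec_cnj y))"
    by (simp add: cinner_def vec_tensor_def vec_cnj_def matrix_vector_mult_def
        sum_distrib_left ac_simps)
  finally show ?thesis .
qed

lemma flip_op_apply: "(flip_op *v v) $ (a, b) = v $ (b, a)"
proof -
  have "(flip_op *v v) $ (a, b) = (\<Sum>q\<in>UNIV. if q = (b, a) then v $ q else 0)"
    unfolding matrix_vector_mult_def flip_op_def
    by (simp only: vec_lambda_beta, intro sum.cong refl) (auto simp: prod_eq_iff)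
  then show ?thesis by simp
qed

lemma cinner_tensor_commute_sym_subspace:
  assumes "v \<in> sym_subspace"
  shows "cinner (vec_tensor x y) v = cinner (vec_tensor y x) v"
proof -
  have v: "v $ (a, b) = v $ (b, a)" for a b
    using assms flip_op_apply[of v b a] by (simp add: sym_subspace_def)
  have "cinner (vec_tensor x y) v = (\<Sum>a\<in>UNIV. \<Sum>b\<in>UNIV. cnj (x $ a * y $ b) * v $ (a, b))"
    by (simp add: cinner_def vec_tensor_def sum_UNIV_pair)
  also have "\<dots> = (\<Sum>b\<in>UNIV. \<Sum>a\<in>UNIV. cnj (y $ b * x $ a) * v $ (b, a))"
    by (subst sum.swap) (simp add: v mult.commute)
  also have "\<dots> = cinner (vec_tensor y x) v"
    by (simp add: cinner_def vec_tensor_def sum_UNIV_pair)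
  finally show ?thesis .
qed

theorem mainTheorem11:
  fixes u :: "'n::finite \<Rightarrow> complex^'d::finite"
    and \<rho> :: "complex^('d\<times>'d)^('d\<times>'d)"
  assumes "CARD('n) \<le> CARD('d)"
    and "\<forall>i j. cinner (u i) (u j) = (if i = j then 1 else 0)"
    and "is_PPT \<rho>"
    and "range (\<lambda>x. \<rho> *v x) \<subseteq> sym_subspace"
  shows "DNN (K_op u ** partial_transpose \<rho> ** cmat_adj (K_op u))"
proof -
  let ?M = "K_op u ** partial_transpose \<rho> ** cmat_adj (K_op u)"
  have psd: "cmat_psd \<rho>" and ppt: "cmat_psd (partial_transpose \<rho>)"
    using assms(3) by (auto simp: is_PPT_def)
  have entry: "?M $ i $ j = cinner (vec_tensor (u j) (u i)) (\<rho> *v vec_tensor (u j) (u i))" for i j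
  proof -
    have "?M $ i $ j = cinner (vec_tensor (u i) (u j)) (\<rho> *v vec_tensor (u j) (u i))"
      by (simp add: cmat_congruence_entry K_op_row partial_transpose_cinner_tensor)
    also have "\<dots> = cinner (vec_tensor (u j) (u i)) (\<rho> *v vec_tensor (u j) (u i))"
      using assms(4) by (intro cinner_tensor_commute_sym_subspace) auto
    finally show ?thesis .
  qed
  have "Im (?M $ i $ j) = 0 \<and> 0 \<le> Re (?M $ i $ j)" for i j
    using psd Im_cinner_hermitian[of \<rho>] by (simp add: entry cmat_psd_iff)
  then show ?thesis
    using cmat_psd_congruence[OF ppt] by (simp add: DNN_def)
qed

end
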